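(* Let $\delta\ge 2$ and $s\in\{1,\dots,n\}$ with $d_s-\delta+1\ge 1$, and let $\tilde d=\sum_{i\ne s}(d_i-1)+d_s-\delta$. If $d\ge\tilde d$ then $\mathcal D^{(\delta,s)}_{\mathcal X}(d)=\mathcal D^{(\delta,s)}_{\mathcal X}(\tilde d)$, and $$\dim_{\mathbb F_q}\mathcal D^{(\delta,s)}_{\mathcal X}(\tilde d)=(d_s-\delta+1)\prod_{i\ne s}d_i .$$ Moreover, if $\tilde d\ge 1$, then $\dim_{\mathbb F_q}\mathcal D^{(\delta,s)}_{\mathcal X}(\tilde d-1)=\dim_{\mathbb F_q}\mathcal D^{(\delta,s)}_{\mathcal X}(\tilde d)-1$.
   Context: Let $\mathbb F_q$ be a finite field, $K_1,\dots,K_n\subseteq\mathbb F_q$ nonempty, $d_i=|K_i|$, and $\mathcal X=K_1\times\cdots\times K_n=\{\boldsymbol\alpha_1,\dots,\boldsymbol\alpha_m\}$ (a fixed enumeration), $m=\prod_{i=1}^n d_i$. Let $\Psi:\mathbb F_q[X_1,\dots,X_n]\to\mathbb F_q^m$, $f\mapsto(f(\boldsymbol\alpha_1),\dots,f(\boldsymbol\alpha_m))$. For $d\ge 0$, $\mathbb F_q[X_1,\dots,X_n]_{\le d}$ is the space of polynomials of degree at most $d$ together with $0$. For integers $\delta\ge 2$ and $s\in\{1,\dots,n\}$, $\mathcal P^{(\delta,s)}_d$ is the set of $f\in\mathbb F_q[X_1,\dots,X_n]_{\le d}$ with $\deg_{X_s}f<d_s-\delta+1$, together with $0$; the $(\delta,s)$-quasi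 affine cartesian code is $\mathcal D^{(\delta,s)}_{\mathcal X}(d)=\Psi(\mathcal P^{(\delta,s)}_d)\subseteq\mathbb F_q^m$. *)

theory Defs
  imports Complex_Main "HOL-Library.Function_Algebras"
begin

text \<open>Multivariate polynomials in X_1..X_n are represented by coefficient functions
  on exponent vectors e :: nat => nat (supported on the index set {1..n}).\<close>

definition qac_monos :: "nat \<Rightarrow> (nat \<Rightarrow> 'a set) \<Rightarrow> nat \<Rightarrow> nat \<Rightarrow> nat \<Rightarrow> (nat \<Rightarrow> nat) set" where
  "qac_monos n K \<delta> s d = {e. (\<forall>i. i \<notin> {1..n} \<longrightarrow> e i = 0) \<and> (\<Sum>i=1..n. e i) \<le> d
       \<and> int (e s) < int (card (K s)) - int \<delta> + 1}"

definition mpoly_eval :: "nat \<Rightarrow> (nat \<Rightarrow> nat) set \<Rightarrow> ((nat \<Rightarrow> nat) \<Rightarrow> 'a::comm_ring_1) \<Rightarrow> (nat \<Rightarrow> 'a) \<Rightarrow> 'a" where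
  "mpoly_eval n M c x = (\<Sum>e\<in>M. c e * (\<Prod>i=1..n. x i ^ e i))"

text \<open>Codewords in F_q^m are represented as functions nat => 'a, zero outside {..<m};
  alpha j is the (j+1)-th point of the enumeration of the grid.\<close>
definition qac_code :: "nat \<Rightarrow> (nat \<Rightarrow> 'a::comm_ring_1 set) \<Rightarrow> nat \<Rightarrow> nat \<Rightarrow> (nat \<Rightarrow> nat \<Rightarrow> 'a) \<Rightarrow> nat \<Rightarrow> nat \<Rightarrow> (nat \<Rightarrow> 'a) set" where
  "qac_code n K \<delta> s alpha m d =
     {(\<lambda>j. if j < m then mpoly_eval n (qac_monos n K \<delta> s d) c (alpha j) else 0) | c. True}"

definition grid :: "nat \<Rightarrow> (nat \<Rightarrow> 'a::zero set) \<Rightarrow> (nat \<Rightarrow> 'a) set" where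
  "grid n K = {x. (\<forall>i\<in>{1..n}. x i \<in> K i) \<and> (\<forall>i. i \<notin> {1..n} \<longrightarrow> x i = 0)}"

definition fdim :: "(nat \<Rightarrow> 'a::field) set \<Rightarrow> nat" where
  "fdim C = Vector_Spaces.vector_space.dim (\<lambda>(c::'a) (v::nat \<Rightarrow> 'a). (\<lambda>j. c * v j)) C"

end

theory Submission
  imports Defs "HOL-Computational_Algebra.Polynomial" "HOL-Library.FuncSet"
begin

text \<open>Reducing each \<open>X\<^sub>i\<^sup>e\<close> modulo \<open>\<Prod>(X\<^sub>i - a)\<close>, \<open>a \<in> K\<^sub>i\<close>, shows that the evaluation of any
  monomial on the grid is a combination of evaluations of reduced monomials (all \<open>X\<^sub>i\<close>-degrees
  below \<open>|K\<^sub>i|\<close>) dividing it. Lagrange interpolation puts every unit vector in their span, and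
  there are exactly \<open>m\<close> reduced monomials, so their evaluations form a basis. The admissible
  monomials are closed under lowering exponents, so the code of degree \<open>d\<close> has as basis the
  evaluations of the reduced admissible monomials of degree at most \<open>d\<close>. These lie in the box
  below the corner \<open>(d\<^sub>1-1, \<dots>, d\<^sub>s-\<delta>, \<dots>, d\<^sub>n-1)\<close>, of total degree \<open>d\<^sup>~\<close>, and the corner is the only
  point of the box of that total degree.\<close>

global_interpretation V: vector_space "\<lambda>(c::'a::field) (v::nat \<Rightarrow> 'a). (\<lambda>j. c * v j)"
  by unfold_locales (auto simp: fun_eq_iff algebra_simps)

lemma fdim_eq_dim: "fdim C = V.dim C"
  unfolding fdim_def by simp

lemma sum_fun_apply: "(\<Sum>x\<in>A. f x) j = (\<Sum>x\<in>A. f x j)"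
  by (induct A rule: infinite_finite_induct) auto

lemma independent_unit_vectors:
  "V.independent ((\<lambda>j0 j. if j = j0 then 1 else 0) ` A :: (nat \<Rightarrow> 'a::field) set)"
  unfolding V.independent_explicit_module
proof (intro allI impI)
  fix T and u :: "(nat \<Rightarrow> 'a) \<Rightarrow> 'a" and v
  assume T: "finite T" "T \<subseteq> (\<lambda>j0 j. if j = j0 then 1 else 0) ` A"
    and zero: "(\<Sum>w\<in>T. (\<lambda>j. u w * w j)) = 0" and v: "v \<in> T"
  obtain j0 where j0: "v = (\<lambda>j. if j = j0 then 1 else 0)" using T(2) v by blast
  have other: "u w * w j0 = 0" if w: "w \<in> T - {v}" for w
  proof -
    obtain j1 where j1: "w = (\<lambda>j. if j = j1 then 1 else 0)" using w T(2) by blast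
    with w j0 have "j1 \<noteq> j0" by auto
    with j1 show ?thesis by simp
  qed
  have "0 = (\<Sum>w\<in>T. u w * w j0)"
    using fun_cong[OF zero, of j0] by (simp add: sum_fun_apply)
  also have "\<dots> = u v * v j0 + (\<Sum>w\<in>T - {v}. u w * w j0)"
    using T(1) v by (simp add: sum.remove)
  also have "(\<Sum>w\<in>T - {v}. u w * w j0) = 0"
    using other by (intro sum.neutral) blast
  also have "u v * v j0 + 0 = u v"
    using j0 by simp
  finally show "u v = 0" by simp
qed

subsection \<open>Univariate interpolation on a finite set\<close>

lemma power_reduced_on:
  fixes K :: "'a::field set"
  assumes "finite K" "K \<noteq> {}"
  obtains p :: "'a poly"
  where "degree p \<le> k" "degree p < card K" "\<forall>t\<in>K. poly p t = t ^ k"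
proof
  define P where "P = (\<Prod>a\<in>K. [:-a, 1:])"
  have P0: "P \<noteq> 0" and degP: "degree P = card K"
    unfolding P_def using assms(1) by (auto simp: degree_prod_eq_sum_degree)
  show "\<forall>t\<in>K. poly (monom 1 k mod P) t = t ^ k"
  proof
    fix t assume "t \<in> K"
    then have "poly P t = 0" using assms(1) by (auto simp: P_def poly_prod)
    have "t ^ k = poly (monom 1 k div P * P + monom 1 k mod P) t"
      by (simp add: poly_monom)
    also have "\<dots> = poly (monom 1 k mod P) t"
      by (simp only: poly_add poly_mult \<open>poly P t = 0\<close>) simp
    finally show "poly (monom 1 k mod P) t = t ^ k" ..
  qed
  show "degree (monom 1 k mod P) < card K"
    using degree_mod_less[OF P0, of "monom 1 k"] degP assms by (auto simp: card_gt_0_iff)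
  show "degree (monom 1 k mod P) \<le> k"
  proof (cases "k < card K")
    case True
    then show ?thesis by (simp add: mod_poly_less degP degree_monom_eq)
  next
    case False
    then show ?thesis using degree_mod_less[OF P0, of "monom 1 k"] degP by auto
  qed
qed

lemma lagrange_indicator_poly:
  fixes K :: "'a::field set"
  assumes "finite K" "a \<in> K"
  obtains q :: "'a poly"
  where "degree q < card K" "\<forall>t\<in>K. poly q t = (if t = a then 1 else 0)"
proof
  define q where
    "q = smult (inverse (\<Prod>b\<in>K - {a}. a - b)) (\<Prod>b\<in>K - {a}. [:-b, 1:])"
  show "\<forall>t\<in>K. poly q t = (if t = a then 1 else 0)"
  proof
    fix t assume t: "t \<in> K"
    have "(\<Prod>b\<in>K - {a}. - b + t) = (\<Prod>b\<in>K - {a}. t - b)"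
      by (intro prod.cong) auto
    moreover have "(\<Prod>b\<in>K - {a}. t - b) = 0" if "t \<noteq> a"
      using that t assms(1) by (subst prod_zero_iff) auto
    moreover have "(\<Prod>b\<in>K - {a}. a - b) \<noteq> 0"
      using assms(1) by simp
    ultimately show "poly q t = (if t = a then 1 else 0)"
      by (auto simp: q_def poly_prod)
  qed
  have "degree q \<le> (\<Sum>b\<in>K - {a}. 1)"
    unfolding q_def
    by (rule order_trans[OF degree_smult_le order_trans[OF degree_prod_sum_le]]) (use assms(1) in auto)
  also have "\<dots> = card (K - {a})"
    by simp
  also have "\<dots> < card K"
    using assms by (rule card_Diff1_less)
  finally show "degree q < card K" .
qed

subsection \<open>Boxes of exponent vectors\<close>

definition exp_box :: "nat \<Rightarrow> (nat \<Rightarrow> nat set) \<Rightarrow> (nat \<Rightarrow> nat) set" where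
  "exp_box n B = {e. (\<forall>i. i \<notin> {1..n} \<longrightarrow> e i = 0) \<and> (\<forall>i\<in>{1..n}. e i \<in> B i)}"

definition monom_eval :: "nat \<Rightarrow> (nat \<Rightarrow> nat) \<Rightarrow> (nat \<Rightarrow> 'a::comm_ring_1) \<Rightarrow> 'a" where
  "monom_eval n e x = (\<Prod>i=1..n. x i ^ e i)"

lemma mpoly_eval_eq: "mpoly_eval n M c x = (\<Sum>e\<in>M. c e * monom_eval n e x)"
  unfolding mpoly_eval_def monom_eval_def ..

lemma inj_on_zero_extend: "inj_on (\<lambda>f i. if i \<in> {1..n} then f i else 0) (PiE {1..n} B)"
  unfolding inj_on_def fun_eq_iff by (metis PiE_ext)

lemma exp_box_eq_image_PiE:
  "exp_box n B = (\<lambda>f i. if i \<in> {1..n} then f i else 0) ` PiE {1..n} B"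
proof (intro equalityI subsetI)
  fix e assume e: "e \<in> exp_box n B"
  then have "e = (\<lambda>i. if i \<in> {1..n} then restrict e {1..n} i else 0)"
    by (auto simp: exp_box_def fun_eq_iff)
  moreover have "restrict e {1..n} \<in> PiE {1..n} B"
    using e by (auto simp: exp_box_def)
  ultimately show "e \<in> (\<lambda>f i. if i \<in> {1..n} then f i else 0) ` PiE {1..n} B"
    by blast
qed (auto simp: exp_box_def PiE_iff)

lemma finite_exp_box: "(\<And>i. i \<in> {1..n} \<Longrightarrow> finite (B i)) \<Longrightarrow> finite (exp_box n B)"
  unfolding exp_box_eq_image_PiE by (auto intro!: finite_PiE)

lemma card_exp_box: "card (exp_box n B) = (\<Prod>i=1..n. card (B i))"
  unfolding exp_box_eq_image_PiE by (subst card_image[OF inj_on_zero_extend]) (simp add: card_PiE)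

lemma prod_poly_expand:
  fixes p :: "nat \<Rightarrow> 'a::comm_ring_1 poly"
  shows "(\<Prod>i=1..n. poly (p i) (x i)) =
    (\<Sum>e\<in>exp_box n (\<lambda>i. {..degree (p i)}). (\<Prod>i=1..n. coeff (p i) (e i)) * monom_eval n e x)"
proof -
  let ?ext = "\<lambda>f i. if i \<in> {1..n} then f i else (0::nat)"
  have "(\<Prod>i=1..n. poly (p i) (x i)) = (\<Prod>i=1..n. \<Sum>j\<le>degree (p i). coeff (p i) j * x i ^ j)"
    by (simp add: poly_altdef)
  also have "\<dots> = (\<Sum>f\<in>PiE {1..n} (\<lambda>i. {..degree (p i)}). \<Prod>i=1..n. coeff (p i) (f i) * x i ^ f i)"
    by (rule prod_sum_PiE) auto
  also have "\<dots> = (\<Sum>f\<in>PiE {1..n} (\<lambda>i. {..degree (p i)}).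
                    (\<Prod>i=1..n. coeff (p i) (?ext f i)) * monom_eval n (?ext f) x)"
    unfolding monom_eval_def prod.distrib[symmetric] by (intro sum.cong prod.cong) auto
  also have "\<dots> = (\<Sum>e\<in>exp_box n (\<lambda>i. {..degree (p i)}). (\<Prod>i=1..n. coeff (p i) (e i)) * monom_eval n e x)"
    unfolding exp_box_eq_image_PiE by (simp only: sum.reindex[OF inj_on_zero_extend] o_def)
  finally show ?thesis .
qed

lemma sum_le_of_exp_box_atMost:
  "e \<in> exp_box n (\<lambda>i. {..b i}) \<Longrightarrow> (\<Sum>i=1..n. e i) \<le> (\<Sum>i=1..n. b i)"
  by (auto simp: exp_box_def intro: sum_mono)

lemma sum_less_of_exp_box_atMost:
  assumes b: "b \<in> exp_box n (\<lambda>i. {..b i})" and e: "e \<in> exp_box n (\<lambda>i. {..b i})" "e \<noteq> b"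
  shows "(\<Sum>i=1..n. e i) < (\<Sum>i=1..n. b i)"
proof (rule sum_strict_mono_ex1)
  show "\<forall>i\<in>{1..n}. e i \<le> b i" using e by (auto simp: exp_box_def)
  obtain i where i: "e i \<noteq> b i" using e(2) by (auto simp: fun_eq_iff)
  with b e have "i \<in> {1..n}" by (force simp: exp_box_def)
  with i e show "\<exists>i\<in>{1..n}. e i < b i" by (auto simp: exp_box_def order_less_le)
qed simp

lemma exp_box_atMost_sum_le:
  assumes "b \<in> exp_box n (\<lambda>i. {..b i})" "(\<Sum>i=1..n. b i) \<le> d"
  shows "{e \<in> exp_box n (\<lambda>i. {..b i}). (\<Sum>i=1..n. e i) \<le> d} = exp_box n (\<lambda>i. {..b i})"
  using assms sum_le_of_exp_box_atMost by fastforce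

lemma exp_box_atMost_sum_less:
  assumes "b \<in> exp_box n (\<lambda>i. {..b i})" "1 \<le> (\<Sum>i=1..n. b i)"
  shows "{e \<in> exp_box n (\<lambda>i. {..b i}). (\<Sum>i=1..n. e i) \<le> (\<Sum>i=1..n. b i) - 1}
    = exp_box n (\<lambda>i. {..b i}) - {b}"
  using assms sum_less_of_exp_box_atMost by fastforce

subsection \<open>Evaluation vectors on an enumerated grid\<close>

locale grid_enum =
  fixes K :: "nat \<Rightarrow> ('a::{finite,field}) set"
    and n m :: nat
    and alpha :: "nat \<Rightarrow> nat \<Rightarrow> 'a"
  assumes K_ne: "\<forall>i\<in>{1..n}. K i \<noteq> {}"
    and m_def: "m = (\<Prod>i=1..n. card (K i))"
    and alpha_enum: "bij_betw alpha {..<m} (grid n K)"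
begin

definition eval_vec :: "(nat \<Rightarrow> nat) \<Rightarrow> nat \<Rightarrow> 'a" where
  "eval_vec e = (\<lambda>j. if j < m then monom_eval n e (alpha j) else 0)"

definition reduced :: "(nat \<Rightarrow> nat) set" where
  "reduced = exp_box n (\<lambda>i. {..<card (K i)})"

lemma alpha_in_grid: "j < m \<Longrightarrow> alpha j \<in> grid n K"
  using alpha_enum by (auto simp: bij_betw_def)

lemma alpha_in_K: "j < m \<Longrightarrow> i \<in> {1..n} \<Longrightarrow> alpha j i \<in> K i"
  using alpha_in_grid by (auto simp: grid_def)

lemma card_K_pos: "i \<in> {1..n} \<Longrightarrow> 0 < card (K i)"
  using K_ne by (simp add: card_gt_0_iff)

lemma finite_reduced: "finite reduced"
  unfolding reduced_def by (rule finite_exp_box) simp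

lemma card_reduced: "card reduced = m"
  unfolding reduced_def m_def card_exp_box by simp

lemma evaluation_code_eq_span:
  assumes "finite M"
  shows "{(\<lambda>j. if j < m then mpoly_eval n M c (alpha j) else 0) | c. True} = V.span (eval_vec ` M)"
proof -
  define cw where "cw c = (\<Sum>e\<in>M. (\<lambda>j. c e * eval_vec e j))" for c :: "(nat \<Rightarrow> nat) \<Rightarrow> 'a"
  have "(\<lambda>j. if j < m then mpoly_eval n M c (alpha j) else 0) = cw c" for c
  proof
    fix j show "(if j < m then mpoly_eval n M c (alpha j) else 0) = cw c j"
      by (cases "j < m") (simp_all add: cw_def sum_fun_apply eval_vec_def mpoly_eval_eq)
  qed
  then have C_eq: "{(\<lambda>j. if j < m then mpoly_eval n M c (alpha j) else 0) | c. True} = range cw"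
    by auto
  have zero: "cw (\<lambda>_. 0) = 0"
    by (rule ext) (simp add: cw_def sum_fun_apply)
  have add: "cw c1 + cw c2 = cw (\<lambda>e. c1 e + c2 e)" for c1 c2
    by (rule ext) (simp only: cw_def sum_fun_apply plus_fun_apply sum.distrib distrib_right)
  have scale: "(\<lambda>j. a * cw c j) = cw (\<lambda>e. a * c e)" for a c
    by (rule ext) (simp only: cw_def sum_fun_apply sum_distrib_left mult.assoc)
  have subspace: "V.subspace (range cw)"
    unfolding V.subspace_def
  proof (intro conjI ballI allI)
    show "0 \<in> range cw"
      using zero by (metis rangeI)
  next
    fix x y assume "x \<in> range cw" "y \<in> range cw"
    then show "x + y \<in> range cw" by (auto simp: add)
  next
    fix a x assume "x \<in> range cw"
    then show "(\<lambda>j. a * x j) \<in> range cw" by (auto simp: scale)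
  qed
  have "eval_vec e \<in> range cw" if "e \<in> M" for e
  proof -
    have "(\<Sum>e'\<in>M. (if e' = e then 1 else 0) * eval_vec e' j) = eval_vec e j" for j
    proof -
      have "(\<Sum>e'\<in>M. (if e' = e then 1 else 0) * eval_vec e' j) = (\<Sum>e'\<in>M. if e' = e then eval_vec e' j else 0)"
        by (rule sum.cong) auto
      also have "\<dots> = eval_vec e j"
        using that assms by simp
      finally show ?thesis .
    qed
    then have "cw (\<lambda>e'. if e' = e then 1 else 0) = eval_vec e"
      by (intro ext) (simp add: cw_def sum_fun_apply)
    then show ?thesis by (metis rangeI)
  qed
  then have "V.span (eval_vec ` M) \<subseteq> range cw"
    by (intro V.span_minimal[OF _ subspace] image_subsetI)
  moreover have "range cw \<subseteq> V.span (eval_vec ` M)"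
    unfolding cw_def by (intro image_subsetI V.span_sum V.span_scale V.span_base) auto
  ultimately show ?thesis
    unfolding C_eq by (rule antisym[rotated])
qed

lemma prod_poly_vec_in_span:
  fixes p :: "nat \<Rightarrow> 'a poly"
  assumes "\<forall>j<m. w j = (\<Prod>i=1..n. poly (p i) (alpha j i))" "\<forall>j\<ge>m. w j = 0"
  shows "w \<in> V.span (eval_vec ` exp_box n (\<lambda>i. {..degree (p i)}))"
proof -
  let ?E = "exp_box n (\<lambda>i. {..degree (p i)})"
  have "w = (\<Sum>e\<in>?E. (\<lambda>j. (\<Prod>i=1..n. coeff (p i) (e i)) * eval_vec e j))"
  proof
    fix j show "w j = (\<Sum>e\<in>?E. (\<lambda>j. (\<Prod>i=1..n. coeff (p i) (e i)) * eval_vec e j)) j"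
      using assms by (cases "j < m") (simp_all add: sum_fun_apply eval_vec_def prod_poly_expand[simplified])
  qed
  also have "\<dots> \<in> V.span (eval_vec ` ?E)"
    by (intro V.span_sum V.span_scale V.span_base) auto
  finally show ?thesis .
qed

lemma eval_vec_in_span_reduced:
  "eval_vec e \<in> V.span (eval_vec ` {f \<in> reduced. \<forall>i. f i \<le> e i})"
proof -
  have "\<forall>i\<in>{1..n}. \<exists>p :: 'a poly. degree p \<le> e i \<and> degree p < card (K i)
          \<and> (\<forall>t\<in>K i. poly p t = t ^ e i)"
  proof
    fix i assume i: "i \<in> {1..n}"
    obtain p :: "'a poly" where "degree p \<le> e i" "degree p < card (K i)" "\<forall>t\<in>K i. poly p t = t ^ e i"
      by (rule power_reduced_on[of "K i" "e i"]) (use K_ne i in auto)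
    then show "\<exists>p :: 'a poly. degree p \<le> e i \<and> degree p < card (K i) \<and> (\<forall>t\<in>K i. poly p t = t ^ e i)"
      by blast
  qed
  from bchoice[OF this] obtain p where p: "\<forall>i\<in>{1..n}. degree (p i) \<le> e i
          \<and> degree (p i) < card (K i) \<and> (\<forall>t\<in>K i. poly (p i) t = t ^ e i)"
    by blast
  have "eval_vec e \<in> V.span (eval_vec ` exp_box n (\<lambda>i. {..degree (p i)}))"
  proof (rule prod_poly_vec_in_span)
    show "\<forall>j<m. eval_vec e j = (\<Prod>i=1..n. poly (p i) (alpha j i))"
    proof (intro allI impI)
      fix j assume j: "j < m"
      have "eval_vec e j = (\<Prod>i=1..n. alpha j i ^ e i)"
        using j by (simp add: eval_vec_def monom_eval_def)
      also have "\<dots> = (\<Prod>i=1..n. poly (p i) (alpha j i))"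
        using p alpha_in_K[OF j] by (intro prod.cong) auto
      finally show "eval_vec e j = (\<Prod>i=1..n. poly (p i) (alpha j i))" .
    qed
  qed (simp add: eval_vec_def)
  moreover have "exp_box n (\<lambda>i. {..degree (p i)}) \<subseteq> {f \<in> reduced. \<forall>i. f i \<le> e i}"
  proof (intro subsetI CollectI conjI allI)
    fix f i assume f: "f \<in> exp_box n (\<lambda>i. {..degree (p i)})"
    then show "f \<in> reduced"
      using p by (auto simp: exp_box_def reduced_def intro: le_less_trans)
    show "f i \<le> e i"
      using f p by (cases "i \<in> {1..n}") (auto simp: exp_box_def intro: le_trans[of "f i" "degree (p i)"])
  qed
  ultimately show ?thesis
    using V.span_mono[OF image_mono] by blast
qed

lemma span_eval_vec_eq_reduced:
  assumes "\<And>e f. e \<in> M \<Longrightarrow> (\<forall>i. f i \<le> e i) \<Longrightarrow> f \<in> M"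
  shows "V.span (eval_vec ` M) = V.span (eval_vec ` (M \<inter> reduced))"
proof
  have "eval_vec e \<in> V.span (eval_vec ` (M \<inter> reduced))" if "e \<in> M" for e
  proof -
    have "{f \<in> reduced. \<forall>i. f i \<le> e i} \<subseteq> M \<inter> reduced"
      using assms[OF that] by blast
    then show ?thesis
      by (rule subsetD[OF V.span_mono[OF image_mono] eval_vec_in_span_reduced])
  qed
  then have "eval_vec ` M \<subseteq> V.span (eval_vec ` (M \<inter> reduced))"
    by (rule image_subsetI)
  then show "V.span (eval_vec ` M) \<subseteq> V.span (eval_vec ` (M \<inter> reduced))"
    by (rule V.span_minimal[OF _ V.subspace_span])
qed (intro V.span_mono image_mono Int_lower1)

lemma unit_vector_in_span_reduced:
  assumes j0: "j0 < m"
  shows "(\<lambda>j. if j = j0 then 1 else 0) \<in> V.span (eval_vec ` reduced)"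
proof -
  have "\<forall>i\<in>{1..n}. \<exists>q :: 'a poly. degree q < card (K i)
          \<and> (\<forall>t\<in>K i. poly q t = (if t = alpha j0 i then 1 else 0))"
  proof
    fix i assume i: "i \<in> {1..n}"
    obtain q :: "'a poly" where "degree q < card (K i)" "\<forall>t\<in>K i. poly q t = (if t = alpha j0 i then 1 else 0)"
      by (rule lagrange_indicator_poly[of "K i" "alpha j0 i"]) (use alpha_in_K[OF j0 i] in auto)
    then show "\<exists>q :: 'a poly. degree q < card (K i) \<and> (\<forall>t\<in>K i. poly q t = (if t = alpha j0 i then 1 else 0))"
      by blast
  qed
  from bchoice[OF this] obtain q where q: "\<forall>i\<in>{1..n}. degree (q i) < card (K i)
          \<and> (\<forall>t\<in>K i. poly (q i) t = (if t = alpha j0 i then 1 else 0))"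
    by blast
  have "(\<lambda>j. if j = j0 then 1 else 0) \<in> V.span (eval_vec ` exp_box n (\<lambda>i. {..degree (q i)}))"
  proof (rule prod_poly_vec_in_span)
    show "\<forall>j<m. (if j = j0 then 1 else 0) = (\<Prod>i=1..n. poly (q i) (alpha j i))"
    proof (intro allI impI)
      fix j assume j: "j < m"
      have factors: "poly (q i) (alpha j i) = (if alpha j i = alpha j0 i then 1 else 0)" if "i \<in> {1..n}" for i
        using q alpha_in_K[OF j that] that by auto
      show "(if j = j0 then 1 else 0) = (\<Prod>i=1..n. poly (q i) (alpha j i))"
      proof (cases "j = j0")
        case True
        then show ?thesis using factors by simp
      next
        case False
        then have "alpha j \<noteq> alpha j0"
          using alpha_enum j j0 by (auto simp: bij_betw_def inj_on_def)
        then obtain i where "alpha j i \<noteq> alpha j0 i"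
          by auto
        moreover have "i \<in> {1..n}"
          using calculation alpha_in_grid[OF j] alpha_in_grid[OF j0] by (force simp: grid_def)
        ultimately show ?thesis
          using False factors by (auto simp: prod_zero_iff)
      qed
    qed
  qed (use j0 in auto)
  moreover have "exp_box n (\<lambda>i. {..degree (q i)}) \<subseteq> reduced"
    using q by (auto simp: exp_box_def reduced_def intro: le_less_trans)
  ultimately show ?thesis
    by (rule subsetD[OF V.span_mono[OF image_mono], rotated])
qed

text \<open>A basis extracted from the \<open>m\<close> evaluation vectors of reduced monomials must still
  span the \<open>m\<close> independent unit vectors, so nothing can be left out.\<close>

lemma independent_eval_vec_reduced: "V.independent (eval_vec ` reduced) \<and> inj_on eval_vec reduced"
proof -
  let ?W = "eval_vec ` reduced"
  let ?U = "(\<lambda>j0 j. if j = j0 then 1 else 0) ` {..<m} :: (nat \<Rightarrow> 'a) set"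
  have "finite ?W"
    using finite_reduced by (rule finite_imageI)
  obtain B where B: "B \<subseteq> ?W" "V.independent B" "?W \<subseteq> V.span B"
    by (rule V.basis_exists)
  have "finite B"
    using B(1) \<open>finite ?W\<close> by (rule finite_subset)
  have "?U \<subseteq> V.span ?W"
    using unit_vector_in_span_reduced by blast
  also have "V.span ?W \<subseteq> V.span B"
    using B(3) by (rule V.span_minimal[OF _ V.subspace_span])
  finally have "card ?U \<le> card B"
    using V.independent_span_bound[OF \<open>finite B\<close> independent_unit_vectors] by blast
  moreover have "inj_on (\<lambda>j0 j. if j = j0 then 1 else 0 :: 'a) {..<m}"
  proof (rule inj_onI)
    fix a b assume "(\<lambda>j. if j = a then 1 else 0 :: 'a) = (\<lambda>j. if j = b then 1 else 0)"
    then have "(if a = a then 1 else 0 :: 'a) = (if a = b then 1 else 0)"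
      by (rule fun_cong)
    then show "a = b"
      by (simp split: if_splits)
  qed
  then have "card ?U = card reduced"
    by (simp add: card_image card_reduced)
  moreover have "card B \<le> card ?W"
    using B(1) \<open>finite ?W\<close> by (rule card_mono[rotated])
  moreover have "card ?W \<le> card reduced"
    using finite_reduced by (rule card_image_le)
  ultimately have "card B = card ?W" and card_W: "card ?W = card reduced"
    by linarith+
  then have "B = ?W"
    using card_subset_eq[OF \<open>finite ?W\<close> B(1)] by blast
  then show ?thesis
    using B(2) eq_card_imp_inj_on[OF finite_reduced card_W] by simp
qed

lemma fdim_span_eval_vec:
  assumes "S \<subseteq> reduced"
  shows "fdim (V.span (eval_vec ` S)) = card S"
proof -
  have "V.independent (eval_vec ` S)"
    using independent_eval_vec_reduced V.independent_mono[OF _ image_mono[OF assms]] by blast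
  then have "fdim (V.span (eval_vec ` S)) = card (eval_vec ` S)"
    by (simp add: fdim_eq_dim V.dim_eq_card_independent)
  also have "\<dots> = card S"
    using independent_eval_vec_reduced assms by (meson card_image inj_on_subset)
  finally show ?thesis .
qed

end

subsection \<open>Quasi affine cartesian codes\<close>

definition qac_corner :: "nat \<Rightarrow> (nat \<Rightarrow> 'a set) \<Rightarrow> nat \<Rightarrow> nat \<Rightarrow> nat \<Rightarrow> nat" where
  "qac_corner n K \<delta> s i =
     (if i \<in> {1..n} then (if i = s then card (K s) - \<delta> else card (K i) - 1) else 0)"

lemma qac_monos_downward_closed:
  assumes e: "e \<in> qac_monos n K \<delta> s d" and f: "\<forall>i. f i \<le> e i"
  shows "f \<in> qac_monos n K \<delta> s d"
proof -
  have "f i = 0" if "i \<notin> {1..n}" for i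
    using e f[rule_format, of i] that unfolding qac_monos_def by simp
  moreover have "(\<Sum>i=1..n. f i) \<le> (\<Sum>i=1..n. e i)"
    using f by (intro sum_mono) auto
  moreover have "int (f s) \<le> int (e s)"
    using f by simp
  ultimately show ?thesis
    using e unfolding qac_monos_def by auto
qed

lemma finite_qac_monos: "finite (qac_monos n K \<delta> s d)"
proof (rule finite_subset)
  show "qac_monos n K \<delta> s d \<subseteq> exp_box n (\<lambda>_. {..d})"
    unfolding qac_monos_def exp_box_def
    by (auto intro: order_trans[OF member_le_sum])
qed (simp add: finite_exp_box)

lemma sum_qac_corner:
  "s \<in> {1..n} \<Longrightarrow> (\<Sum>i=1..n. qac_corner n K \<delta> s i) = (\<Sum>i\<in>{1..n}-{s}. card (K i) - 1) + (card (K s) - \<delta>)"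
  by (simp add: qac_corner_def sum.remove)

lemma qac_corner_in_box: "qac_corner n K \<delta> s \<in> exp_box n (\<lambda>i. {..qac_corner n K \<delta> s i})"
  by (simp add: exp_box_def qac_corner_def)

context grid_enum
begin

lemma card_qac_corner_box:
  assumes "s \<in> {1..n}"
  shows "card (exp_box n (\<lambda>i. {..qac_corner n K \<delta> s i})) = (card (K s) - \<delta> + 1) * (\<Prod>i\<in>{1..n}-{s}. card (K i))"
proof -
  have "card (exp_box n (\<lambda>i. {..qac_corner n K \<delta> s i})) = (\<Prod>i=1..n. qac_corner n K \<delta> s i + 1)"
    by (simp add: card_exp_box)
  also have "\<dots> = (card (K s) - \<delta> + 1) * (\<Prod>i\<in>{1..n}-{s}. qac_corner n K \<delta> s i + 1)"
    using assms by (simp add: prod.remove qac_corner_def)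
  also have "(\<Prod>i\<in>{1..n}-{s}. qac_corner n K \<delta> s i + 1) = (\<Prod>i\<in>{1..n}-{s}. card (K i))"
    using card_K_pos by (intro prod.cong) (auto simp: qac_corner_def)
  finally show ?thesis .
qed

lemma le_qac_corner_iff:
  assumes "i \<in> {1..n}" "1 \<le> \<delta>" "\<delta> \<le> card (K s)"
  shows "k \<le> qac_corner n K \<delta> s i \<longleftrightarrow> k < card (K i) \<and> (i = s \<longrightarrow> int k < int (card (K s)) - int \<delta> + 1)"
  using assms card_K_pos[of i] by (auto simp: qac_corner_def)

lemma qac_corner_box_subset_reduced:
  "1 \<le> \<delta> \<Longrightarrow> \<delta> \<le> card (K s) \<Longrightarrow> exp_box n (\<lambda>i. {..qac_corner n K \<delta> s i}) \<subseteq> reduced"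
  by (auto simp: exp_box_def reduced_def le_qac_corner_iff)

lemma qac_code_eq_span_corner_box:
  assumes s: "s \<in> {1..n}" and \<delta>: "1 \<le> \<delta>" "\<delta> \<le> card (K s)"
  shows "qac_code n K \<delta> s alpha m d =
    V.span (eval_vec ` {e \<in> exp_box n (\<lambda>i. {..qac_corner n K \<delta> s i}). (\<Sum>i=1..n. e i) \<le> d})"
proof -
  have "qac_monos n K \<delta> s d \<inter> reduced
      = {e \<in> exp_box n (\<lambda>i. {..qac_corner n K \<delta> s i}). (\<Sum>i=1..n. e i) \<le> d}"
    using \<delta> s by (auto simp: qac_monos_def reduced_def exp_box_def le_qac_corner_iff)
  then show ?thesis
    unfolding qac_code_def evaluation_code_eq_span[OF finite_qac_monos]
    by (simp add: span_eval_vec_eq_reduced qac_monos_downward_closed)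
qed

lemma fdim_qac_code:
  assumes "s \<in> {1..n}" "1 \<le> \<delta>" "\<delta> \<le> card (K s)"
  shows "fdim (qac_code n K \<delta> s alpha m d) =
    card {e \<in> exp_box n (\<lambda>i. {..qac_corner n K \<delta> s i}). (\<Sum>i=1..n. e i) \<le> d}"
  unfolding qac_code_eq_span_corner_box[OF assms]
  using qac_corner_box_subset_reduced[OF assms(2,3)] by (intro fdim_span_eval_vec) blast

end

theorem mainTheorem3:
  fixes K :: "nat \<Rightarrow> ('a::{finite,field}) set"
    and n s \<delta> m :: nat
    and alpha :: "nat \<Rightarrow> nat \<Rightarrow> 'a"
  assumes K_ne: "\<forall>i\<in>{1..n}. K i \<noteq> {}"
    and m_def: "m = (\<Prod>i=1..n. card (K i))"
    and alpha_enum: "bij_betw alpha {..<m} (grid n K)"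
    and delta: "\<delta> \<ge> 2"
    and s_in: "s \<in> {1..n}"
    and ds: "int (card (K s)) - int \<delta> + 1 \<ge> 1"
  shows "let dt = (\<Sum>i\<in>{1..n}-{s}. (card (K i) - 1)) + (card (K s) - \<delta>) in
         (\<forall>d\<ge>dt. qac_code n K \<delta> s alpha m d = qac_code n K \<delta> s alpha m dt)
       \<and> fdim (qac_code n K \<delta> s alpha m dt) = (card (K s) - \<delta> + 1) * (\<Prod>i\<in>{1..n}-{s}. card (K i))
       \<and> (dt \<ge> 1 \<longrightarrow> fdim (qac_code n K \<delta> s alpha m (dt - 1)) = fdim (qac_code n K \<delta> s alpha m dt) - 1)"
proof -
  interpret grid_enum K n m alpha
    using K_ne m_def alpha_enum by unfold_locales
  let ?box = "exp_box n (\<lambda>i. {..qac_corner n K \<delta> s i})"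
  let ?dt = "\<Sum>i=1..n. qac_corner n K \<delta> s i"
  have \<delta>: "1 \<le> \<delta>" "\<delta> \<le> card (K s)"
    using delta ds by auto
  have full: "{e \<in> ?box. (\<Sum>i=1..n. e i) \<le> d} = ?box" if "?dt \<le> d" for d
    using exp_box_atMost_sum_le[OF qac_corner_in_box that] .
  show ?thesis
    unfolding Let_def sum_qac_corner[OF s_in, symmetric] fdim_qac_code[OF s_in \<delta>]
  proof (intro conjI allI impI)
    fix d assume "?dt \<le> d"
    show "qac_code n K \<delta> s alpha m d = qac_code n K \<delta> s alpha m ?dt"
      unfolding qac_code_eq_span_corner_box[OF s_in \<delta>] full[OF \<open>?dt \<le> d\<close>] full[OF order_refl]
      by (rule refl)
  next
    show "card {e \<in> ?box. (\<Sum>i=1..n. e i) \<le> ?dt} = (card (K s) - \<delta> + 1) * (\<Prod>i\<in>{1..n}-{s}. card (K i))"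
      unfolding full[OF order_refl] by (rule card_qac_corner_box[OF s_in])
  next
    assume "1 \<le> ?dt"
    show "card {e \<in> ?box. (\<Sum>i=1..n. e i) \<le> ?dt - 1} = card {e \<in> ?box. (\<Sum>i=1..n. e i) \<le> ?dt} - 1"
      unfolding full[OF order_refl] exp_box_atMost_sum_less[OF qac_corner_in_box \<open>1 \<le> ?dt\<close>]
      by (simp add: qac_corner_in_box)
  qed
qed

end
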